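(* Let $G_1=(V_1,E_1)$ be a finite connected graph with $n=|V_1|\ge 2$, let $u\in V_1$, and let $G$ be the graph obtained from $G_1$ by adding one new vertex $v$ and the single edge $\{u,v\}$. Let $D_1$, $D_G$ be the distance matrices of $G_1$, $G$. Assume: (C1) $2+\frac{k_1}{n}\neq 0$; (C2) $D_1$ is invertible; (C3) $k_u:=K_{G_1}(u)\neq 0$, where $K_{G_1}=nD_1^{-1}\mathbf{1}_n$ is the Steinerberger curvature of $G_1$ and $k_1=\sum_{x\in V_1}K_{G_1}(x)$ is its total curvature. Then $D_G$ is invertible and the Steinerberger curvature $K_G=(n+1)D_G^{-1}\mathbf{1}_{n+1}$ of $G$ satisfies $$K_G(x)=\alpha\,K_{G_1}(x)\quad\text{for all }x\in V_1\setminus\{u\},\qquad \alpha=\frac{2(n+1)}{2n+k_1},$$ $$K_G(u)=\gamma\,k_u,\quad \gamma=\Big(1-\frac{k_1}{2k_u}\Big)\alpha,\qquad K_G(v)=\frac{(n+1)k_1}{2n+k_1}.$$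
   Context: All graphs are finite, simple, connected and undirected, with the combinatorial shortest-path distance $d$. For $G=(V,E)$ with $V=\{v_1,\dots,v_n\}$, let $D=(d(v_i,v_j))_{i,j=1}^n$ be its distance matrix and $\mathbf{1}_n\in\mathbb{R}^n$ the all-ones column vector. The Steinerberger curvature $K\in\mathbb{R}^n$ (written $K_i$ or $K(v_i)$) is defined as follows: if $DK=n\mathbf{1}_n$ has a unique solution, $K$ is that solution; if it has several solutions, $K$ is a solution for which $\min_i K_i$ is maximal; if it has no solution, $K=nD^\dagger\mathbf{1}_n$ with $D^\dagger$ the Moore–Penrose pseudoinverse. The total curvature of a vertex subset $W$ is $K(W)=\sum_{w\in W}K(w)$. *)

theory Defs
  imports Complex_Main
begin

definition simple_graph :: "'a set \<Rightarrow> ('a \<Rightarrow> 'a \<Rightarrow> bool) \<Rightarrow> bool" where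
  "simple_graph V E \<longleftrightarrow> finite V \<and> (\<forall>a b. E a b \<longrightarrow> a \<in> V \<and> b \<in> V) \<and>
     (\<forall>a b. E a b \<longrightarrow> E b a) \<and> (\<forall>a. \<not> E a a)"

definition is_walk :: "'a set \<Rightarrow> ('a \<Rightarrow> 'a \<Rightarrow> bool) \<Rightarrow> 'a list \<Rightarrow> bool" where
  "is_walk V E xs \<longleftrightarrow> xs \<noteq> [] \<and> set xs \<subseteq> V \<and>
     (\<forall>i. Suc i < length xs \<longrightarrow> E (xs ! i) (xs ! Suc i))"

definition connected_graph :: "'a set \<Rightarrow> ('a \<Rightarrow> 'a \<Rightarrow> bool) \<Rightarrow> bool" where
  "connected_graph V E \<longleftrightarrow> V \<noteq> {} \<and>
     (\<forall>x\<in>V. \<forall>y\<in>V. \<exists>xs. is_walk V E xs \<and> hd xs = x \<and> last xs = y)"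

definition gdist :: "'a set \<Rightarrow> ('a \<Rightarrow> 'a \<Rightarrow> bool) \<Rightarrow> 'a \<Rightarrow> 'a \<Rightarrow> nat" where
  "gdist V E x y = (LEAST n. \<exists>xs. is_walk V E xs \<and> hd xs = x \<and> last xs = y \<and> length xs = Suc n)"

definition dist_matrix :: "'a set \<Rightarrow> ('a \<Rightarrow> 'a \<Rightarrow> bool) \<Rightarrow> 'a \<Rightarrow> 'a \<Rightarrow> real" where
  "dist_matrix V E x y = real (gdist V E x y)"

definition is_inverse_on :: "'a set \<Rightarrow> ('a \<Rightarrow> 'a \<Rightarrow> real) \<Rightarrow> ('a \<Rightarrow> 'a \<Rightarrow> real) \<Rightarrow> bool" where
  "is_inverse_on V A M \<longleftrightarrow>
     (\<forall>x\<in>V. \<forall>z\<in>V. (\<Sum>y\<in>V. M x y * A y z) = (if x = z then 1 else 0)) \<and>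
     (\<forall>x\<in>V. \<forall>z\<in>V. (\<Sum>y\<in>V. A x y * M y z) = (if x = z then 1 else 0))"

definition invertible_on :: "'a set \<Rightarrow> ('a \<Rightarrow> 'a \<Rightarrow> real) \<Rightarrow> bool" where
  "invertible_on V A \<longleftrightarrow> (\<exists>M. is_inverse_on V A M)"

text \<open>The inverse (entries outside V\<times>V set to 0 to make it unique).\<close>
definition inverse_on :: "'a set \<Rightarrow> ('a \<Rightarrow> 'a \<Rightarrow> real) \<Rightarrow> 'a \<Rightarrow> 'a \<Rightarrow> real" where
  "inverse_on V A = (THE M. is_inverse_on V A M \<and> (\<forall>x y. (x \<notin> V \<or> y \<notin> V) \<longrightarrow> M x y = 0))"

definition curvature :: "'a set \<Rightarrow> ('a \<Rightarrow> 'a \<Rightarrow> bool) \<Rightarrow> 'a \<Rightarrow> real" where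
  "curvature V E x = real (card V) * (\<Sum>y\<in>V. inverse_on V (dist_matrix V E) x y)"

definition add_edge :: "('a \<Rightarrow> 'a \<Rightarrow> bool) \<Rightarrow> 'a \<Rightarrow> 'a \<Rightarrow> 'a \<Rightarrow> 'a \<Rightarrow> bool" where
  "add_edge E u v a b \<longleftrightarrow> E a b \<or> (a = u \<and> b = v) \<or> (a = v \<and> b = u)"

end

theory Submission
  imports Defs
begin

text \<open>Every walk from the new vertex \<open>v\<close> passes through \<open>u\<close>, so \<open>D\<^sub>G\<close> is \<open>D\<^sub>1\<close> bordered by the
  column \<open>d = D\<^sub>1 e\<^sub>u + \<one>\<close> with corner \<open>0\<close>. For \<open>N = D\<^sub>1\<^sup>-\<^sup>1\<close> we get \<open>N d = e\<^sub>u + R\<close> with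
  \<open>R = N \<one> = K\<^sub>G\<^sub>1 / n\<close>, and the Schur complement of the corner is
  \<open>-d\<^sup>T (e\<^sub>u + R) = -(2 + k\<^sub>1 / n)\<close>, nonzero by (C1). The block inverse formula gives \<open>D\<^sub>G\<^sup>-\<^sup>1\<close>
  explicitly, and the curvatures of \<open>G\<close> are \<open>n + 1\<close> times its row sums.\<close>

section \<open>Walks and distances\<close>

lemma is_walk_singleton [simp]: "is_walk V E [x] \<longleftrightarrow> x \<in> V"
  by (auto simp: is_walk_def)

lemma is_walk_Cons_Cons:
  "is_walk V E (x # y # ys) \<longleftrightarrow> x \<in> V \<and> E x y \<and> is_walk V E (y # ys)"
proof -
  have "(\<forall>i. Suc i < length (x # y # ys) \<longrightarrow> E ((x # y # ys) ! i) ((x # y # ys) ! Suc i)) \<longleftrightarrow>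
        E x y \<and> (\<forall>i. Suc i < length (y # ys) \<longrightarrow> E ((y # ys) ! i) ((y # ys) ! Suc i))"
    by (auto simp: less_Suc_eq_0_disj)
  then show ?thesis by (auto simp: is_walk_def)
qed

lemma is_walk_mono:
  "is_walk V E xs \<Longrightarrow> V \<subseteq> V' \<Longrightarrow> (\<And>a b. E a b \<Longrightarrow> E' a b) \<Longrightarrow> is_walk V' E' xs"
  unfolding is_walk_def by blast

lemma is_walk_rev:
  assumes "is_walk V E xs" and sym: "\<And>a b. E a b \<Longrightarrow> E b a"
  shows "is_walk V E (rev xs)"
  unfolding is_walk_def
proof (intro conjI allI impI)
  show "rev xs \<noteq> []" "set (rev xs) \<subseteq> V" using assms(1) by (auto simp: is_walk_def)
  fix i assume i: "Suc i < length (rev xs)"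
  define j where "j = length xs - 2 - i"
  have "E (xs ! j) (xs ! Suc j)" using assms(1) i by (auto simp: is_walk_def j_def)
  moreover have "rev xs ! i = xs ! Suc j" "rev xs ! Suc i = xs ! j"
    using i by (simp_all add: rev_nth j_def Suc_diff_Suc)
  ultimately show "E (rev xs ! i) (rev xs ! Suc i)" using sym by simp
qed

lemma gdist_le_length:
  assumes "is_walk V E xs" "hd xs = x" "last xs = y"
  shows "gdist V E x y \<le> length xs - 1"
proof -
  have "length xs = Suc (length xs - 1)" using assms(1) by (simp add: is_walk_def)
  then show ?thesis unfolding gdist_def using assms by (intro Least_le) metis
qed

lemma shortest_walk_exists:
  assumes "is_walk V E xs" "hd xs = x" "last xs = y"
  obtains ys where "is_walk V E ys" "hd ys = x" "last ys = y" "length ys = Suc (gdist V E x y)"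
proof -
  have "length xs = Suc (length xs - 1)" using assms(1) by (simp add: is_walk_def)
  then have "\<exists>n xs. is_walk V E xs \<and> hd xs = x \<and> last xs = y \<and> length xs = Suc n"
    using assms by blast
  then have "\<exists>ys. is_walk V E ys \<and> hd ys = x \<and> last ys = y \<and> length ys = Suc (gdist V E x y)"
    unfolding gdist_def by (rule LeastI_ex)
  then show ?thesis using that by blast
qed

lemma gdist_sym:
  assumes "\<And>a b. E a b \<Longrightarrow> E b a"
  shows "gdist V E x y = gdist V E y x"
proof -
  have rev: "\<exists>xs. is_walk V E xs \<and> hd xs = b \<and> last xs = a \<and> length xs = Suc n"
    if "is_walk V E xs" "hd xs = a" "last xs = b" "length xs = Suc n" for xs a b n
    using that is_walk_rev[OF that(1) assms]
    by (intro exI[of _ "rev xs"]) (auto simp: hd_rev last_rev is_walk_def)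
  show ?thesis unfolding gdist_def by (rule arg_cong[where f = Least], rule ext) (metis rev)
qed

lemma gdist_self: "x \<in> V \<Longrightarrow> gdist V E x x = 0"
  using gdist_le_length[of V E "[x]" x x] by simp

section \<open>Matrices indexed by a finite set\<close>

lemma sum_mult_delta_right:
  "finite A \<Longrightarrow> a \<in> A \<Longrightarrow> (\<Sum>y\<in>A. f y * (if y = a then 1 else 0)) = (f a :: 'b::semiring_1)"
  by (simp add: if_distrib[of "times _"] cong: if_cong)
lemma sum_mult_delta_left:
  "finite A \<Longrightarrow> a \<in> A \<Longrightarrow> (\<Sum>y\<in>A. (if a = y then 1 else 0) * f y) = (f a :: 'b::semiring_1)"
  by (simp add: if_distrib[of "\<lambda>t. t * _"] cong: if_cong)

lemma is_inverse_on_unique: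
  assumes "finite V" "is_inverse_on V A M" "is_inverse_on V A M'" "x \<in> V" "z \<in> V"
  shows "M x z = M' x z"
proof -
  have "M x z = (\<Sum>y\<in>V. M x y * (\<Sum>w\<in>V. A y w * M' w z))"
    using assms by (simp add: is_inverse_on_def sum_mult_delta_right cong: sum.cong)
  also have "\<dots> = (\<Sum>w\<in>V. (\<Sum>y\<in>V. M x y * A y w) * M' w z)"
    by (simp add: sum_distrib_left sum_distrib_right mult.assoc) (rule sum.swap)
  also have "\<dots> = M' x z"
    using assms by (simp add: is_inverse_on_def sum_mult_delta_left cong: sum.cong)
  finally show ?thesis .
qed

lemma inverse_on_eqI:
  assumes "finite V" "is_inverse_on V A M" "x \<in> V" "y \<in> V"
  shows "inverse_on V A x y = M x y"
proof -
  define M0 where "M0 x y = (if x \<in> V \<and> y \<in> V then M x y else 0)" for x y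
  have M0: "is_inverse_on V A M0"
    using assms(2) unfolding is_inverse_on_def M0_def by (auto cong: sum.cong)
  have "inverse_on V A = M0"
    unfolding inverse_on_def
  proof (rule the_equality)
    show "is_inverse_on V A M0 \<and> (\<forall>x y. x \<notin> V \<or> y \<notin> V \<longrightarrow> M0 x y = 0)"
      using M0 by (simp add: M0_def)
    show "M1 = M0" if "is_inverse_on V A M1 \<and> (\<forall>x y. x \<notin> V \<or> y \<notin> V \<longrightarrow> M1 x y = 0)" for M1
      using that is_inverse_on_unique[OF assms(1) _ assms(2)] by (auto simp: M0_def fun_eq_iff)
  qed
  then show ?thesis using assms by (simp add: M0_def)
qed

lemma is_inverse_on_inverse_on:
  assumes "finite V" "invertible_on V A"
  shows "is_inverse_on V A (inverse_on V A)"
proof -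
  obtain M where M: "is_inverse_on V A M" using assms(2) by (auto simp: invertible_on_def)
  then show ?thesis using inverse_on_eqI[OF assms(1) M] by (simp add: is_inverse_on_def cong: sum.cong)
qed

lemma is_inverse_on_of_symmetric:
  assumes "\<And>x y. x \<in> V \<Longrightarrow> y \<in> V \<Longrightarrow> A x y = A y x"
    and "\<And>x y. x \<in> V \<Longrightarrow> y \<in> V \<Longrightarrow> M x y = M y x"
    and right: "\<And>x z. x \<in> V \<Longrightarrow> z \<in> V \<Longrightarrow> (\<Sum>y\<in>V. A x y * M y z) = (if x = z then 1 else 0)"
  shows "is_inverse_on V A M"
proof -
  have "(\<Sum>y\<in>V. M x y * A y z) = (if x = z then 1 else 0)" if "x \<in> V" "z \<in> V" for x z
  proof -
    have "(\<Sum>y\<in>V. M x y * A y z) = (\<Sum>y\<in>V. A z y * M y x)"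
      using assms(1,2) that by (auto simp: mult.commute intro: sum.cong)
    then show ?thesis using right[OF that(2,1)] by simp
  qed
  then show ?thesis using right by (simp add: is_inverse_on_def)
qed

lemma is_inverse_on_symmetric:
  assumes "finite V" "is_inverse_on V A N" "\<And>x y. x \<in> V \<Longrightarrow> y \<in> V \<Longrightarrow> A x y = A y x"
    and "x \<in> V" "y \<in> V"
  shows "N x y = N y x"
proof -
  have "is_inverse_on V A (\<lambda>x y. N y x)"
    using assms(2,3) unfolding is_inverse_on_def
    by (auto simp: mult.commute intro!: trans[OF sum.cong])
  then show ?thesis using is_inverse_on_unique[OF assms(1,2)] assms(4,5) by blast
qed

lemma is_inverse_on_cancel_right:
  assumes "finite V" "is_inverse_on V A N" "x \<in> V"
  shows "(\<Sum>y\<in>V. A x y * (\<Sum>z\<in>V. N y z * d z)) = d x"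
proof -
  have "(\<Sum>y\<in>V. A x y * (\<Sum>z\<in>V. N y z * d z)) = (\<Sum>z\<in>V. (\<Sum>y\<in>V. A x y * N y z) * d z)"
    by (simp add: sum_distrib_left sum_distrib_right mult.assoc) (rule sum.swap)
  also have "\<dots> = d x"
    using assms by (simp add: is_inverse_on_def sum_mult_delta_left cong: sum.cong)
  finally show ?thesis .
qed

text \<open>The inverse of the bordered symmetric matrix \<open>[[A, d], [d\<^sup>T, a]]\<close>, in terms of
  \<open>N = A\<^sup>-\<^sup>1\<close>, \<open>c = N d\<close> and the Schur complement \<open>s = a - d\<^sup>T N d\<close>.\<close>
definition bordered_inverse ::
    "'a \<Rightarrow> ('a \<Rightarrow> 'a \<Rightarrow> real) \<Rightarrow> ('a \<Rightarrow> real) \<Rightarrow> real \<Rightarrow> 'a \<Rightarrow> 'a \<Rightarrow> real" where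
  "bordered_inverse v N c s x y =
     (if x = v then if y = v then 1 / s else - c y / s
      else if y = v then - c x / s else N x y + c x * c y / s)"

lemma bordered_inverse_simps:
  "x \<noteq> v \<Longrightarrow> y \<noteq> v \<Longrightarrow> bordered_inverse v N c s x y = N x y + c x * c y / s"
  "x \<noteq> v \<Longrightarrow> bordered_inverse v N c s x v = c x * (- 1 / s)"
  "y \<noteq> v \<Longrightarrow> bordered_inverse v N c s v y = c y * (- 1 / s)"
  "bordered_inverse v N c s v v = 1 / s"
  by (simp_all add: bordered_inverse_def)

lemma bordered_inverse_right_inverse:
  assumes fin: "finite V" and v: "v \<notin> V"
    and N: "\<And>x z. x \<in> V \<Longrightarrow> z \<in> V \<Longrightarrow> (\<Sum>y\<in>V. A x y * N y z) = (if x = z then 1 else 0)"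
    and B_old: "\<And>x y. x \<in> V \<Longrightarrow> y \<in> V \<Longrightarrow> B x y = A x y"
    and B_border: "\<And>x. x \<in> V \<Longrightarrow> B x v = d x" "\<And>x. x \<in> V \<Longrightarrow> B v x = d x"
    and B_corner: "B v v = a"
    and Ac: "\<And>x. x \<in> V \<Longrightarrow> (\<Sum>y\<in>V. A x y * c y) = d x"
    and dN: "\<And>z. z \<in> V \<Longrightarrow> (\<Sum>y\<in>V. d y * N y z) = c z"
    and s: "s = a - (\<Sum>y\<in>V. d y * c y)" "s \<noteq> 0"
    and x: "x \<in> insert v V" and z: "z \<in> insert v V"
  shows "(\<Sum>y\<in>insert v V. B x y * bordered_inverse v N c s y z) = (if x = z then 1 else 0)"
proof -
  let ?M = "bordered_inverse v N c s"
  have split: "(\<Sum>y\<in>insert v V. B x y * ?M y z) = B x v * ?M v z + (\<Sum>y\<in>V. B x y * ?M y z)"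
    using fin v by simp
  have old: "y \<in> V \<Longrightarrow> y \<noteq> v" for y using v by blast
  consider "x \<in> V" "z \<in> V" | "x \<in> V" "z = v" | "x = v" "z \<in> V" | "x = v" "z = v"
    using x z by blast
  then show ?thesis
  proof cases
    case 1
    have "(\<Sum>y\<in>V. B x y * ?M y z) = (\<Sum>y\<in>V. A x y * N y z + A x y * c y * (c z / s))"
      using 1 by (intro sum.cong) (auto simp: B_old bordered_inverse_simps old algebra_simps)
    also have "\<dots> = (\<Sum>y\<in>V. A x y * N y z) + (\<Sum>y\<in>V. A x y * c y) * (c z / s)"
      by (simp only: sum.distrib sum_distrib_right)
    finally show ?thesis using 1 split N Ac B_border by (simp add: bordered_inverse_simps old)
  next
    case 2
    have "(\<Sum>y\<in>V. B x y * ?M y z) = (\<Sum>y\<in>V. A x y * c y * (- 1 / s))"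
      using 2 by (intro sum.cong) (auto simp: B_old bordered_inverse_simps old)
    also have "\<dots> = (\<Sum>y\<in>V. A x y * c y) * (- 1 / s)"
      by (simp only: sum_distrib_right)
    finally show ?thesis using 2 split Ac B_border s(2) old by (simp add: bordered_inverse_simps)
  next
    case 3
    have "(\<Sum>y\<in>V. B x y * ?M y z) = (\<Sum>y\<in>V. d y * N y z + d y * c y * (c z / s))"
      using 3 by (intro sum.cong) (auto simp: B_border bordered_inverse_simps old algebra_simps)
    also have "\<dots> = (\<Sum>y\<in>V. d y * N y z) + (\<Sum>y\<in>V. d y * c y) * (c z / s)"
      by (simp only: sum.distrib sum_distrib_right)
    also have "\<dots> = c z + (a - s) * (c z / s)"
      using 3 dN s(1) by simp
    finally show ?thesis
      using 3 split B_corner s(2) old[of z] by (simp add: bordered_inverse_simps field_simps)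
  next
    case 4
    have "(\<Sum>y\<in>V. B x y * ?M y z) = (\<Sum>y\<in>V. d y * c y * (- 1 / s))"
      using 4 by (intro sum.cong) (auto simp: B_border bordered_inverse_simps old)
    also have "\<dots> = (a - s) * (- 1 / s)"
      by (simp only: s(1) flip: sum_distrib_right) simp
    finally show ?thesis using 4 split B_corner s(2) by (simp add: bordered_inverse_simps field_simps)
  qed
qed

lemma is_inverse_on_bordered:
  assumes fin: "finite V" and v: "v \<notin> V"
    and N: "is_inverse_on V A N" and A_sym: "\<And>x y. x \<in> V \<Longrightarrow> y \<in> V \<Longrightarrow> A x y = A y x"
    and B_old: "\<And>x y. x \<in> V \<Longrightarrow> y \<in> V \<Longrightarrow> B x y = A x y"
    and B_border: "\<And>x. x \<in> V \<Longrightarrow> B x v = d x" "\<And>x. x \<in> V \<Longrightarrow> B v x = d x"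
    and B_corner: "B v v = a"
    and c: "\<And>x. x \<in> V \<Longrightarrow> c x = (\<Sum>y\<in>V. N x y * d y)"
    and s: "s = a - (\<Sum>y\<in>V. d y * c y)" "s \<noteq> 0"
  shows "is_inverse_on (insert v V) B (bordered_inverse v N c s)"
proof (rule is_inverse_on_of_symmetric)
  have N_sym: "N x y = N y x" if "x \<in> V" "y \<in> V" for x y
    using is_inverse_on_symmetric[OF fin N A_sym that] .
  show "B x y = B y x" if "x \<in> insert v V" "y \<in> insert v V" for x y
    using that B_old A_sym B_border by auto
  show "bordered_inverse v N c s x y = bordered_inverse v N c s y x"
    if "x \<in> insert v V" "y \<in> insert v V" for x y
    using that N_sym v by (auto simp: bordered_inverse_def)
  have Ac: "(\<Sum>y\<in>V. A x y * c y) = d x" if "x \<in> V" for x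
    using is_inverse_on_cancel_right[OF fin N that] by (simp add: c cong: sum.cong)
  have dN: "(\<Sum>y\<in>V. d y * N y z) = c z" if "z \<in> V" for z
    using that by (simp add: c N_sym mult.commute cong: sum.cong)
  show "(\<Sum>y\<in>insert v V. B x y * bordered_inverse v N c s y z) = (if x = z then 1 else 0)"
    if "x \<in> insert v V" "z \<in> insert v V" for x z
    using N that by (intro bordered_inverse_right_inverse[OF fin v _ B_old B_border B_corner Ac dN s])
      (auto simp: is_inverse_on_def)
qed

lemma sum_bordered_inverse_row:
  assumes "finite V" "v \<notin> V" "x \<in> V"
  shows "(\<Sum>y\<in>insert v V. bordered_inverse v N c s x y) = (\<Sum>y\<in>V. N x y) + c x * (sum c V - 1) / s"
proof -
  have "(\<Sum>y\<in>insert v V. bordered_inverse v N c s x y) =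
      c x * (- 1 / s) + (\<Sum>y\<in>V. N x y + c x / s * c y)"
    using assms by (auto simp: bordered_inverse_def intro!: sum.cong)
  also have "\<dots> = c x * (- 1 / s) + ((\<Sum>y\<in>V. N x y) + c x / s * sum c V)"
    by (simp only: sum.distrib sum_distrib_left)
  finally show ?thesis by (simp add: algebra_simps diff_divide_distrib)
qed

lemma sum_bordered_inverse_new_row:
  assumes "finite V" "v \<notin> V"
  shows "(\<Sum>y\<in>insert v V. bordered_inverse v N c s v y) = (1 - sum c V) / s"
proof -
  have "(\<Sum>y\<in>insert v V. bordered_inverse v N c s v y) = 1 / s + (\<Sum>y\<in>V. c y * (- 1 / s))"
    using assms by (auto simp: bordered_inverse_def intro!: sum.cong)
  also have "\<dots> = 1 / s + sum c V * (- 1 / s)"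
    by (simp only: sum_distrib_right)
  finally show ?thesis by (simp add: diff_divide_distrib)
qed

lemma curvature_eq_row_sum:
  assumes "finite V" "is_inverse_on V (dist_matrix V E) M" "x \<in> V"
  shows "curvature V E x = real (card V) * (\<Sum>y\<in>V. M x y)"
  using assms by (simp add: curvature_def inverse_on_eqI)

section \<open>Attaching a pendant vertex\<close>

locale pendant_extension =
  fixes V1 :: "'a set" and E1 :: "'a \<Rightarrow> 'a \<Rightarrow> bool" and u v :: 'a
  assumes simple: "simple_graph V1 E1" and connected: "connected_graph V1 E1"
    and u_in: "u \<in> V1" and v_notin: "v \<notin> V1"
begin

abbreviation V :: "'a set" where "V \<equiv> insert v V1"
abbreviation E :: "'a \<Rightarrow> 'a \<Rightarrow> bool" where "E \<equiv> add_edge E1 u v"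

lemma finite_V1: "finite V1"
  using simple by (simp add: simple_graph_def)

lemma card_V1_pos: "0 < card V1"
  using finite_V1 u_in card_gt_0_iff by blast

lemma E1_sym: "E1 a b \<Longrightarrow> E1 b a"
  using simple by (simp add: simple_graph_def)

lemma E_sym: "E a b \<Longrightarrow> E b a"
  using E1_sym by (auto simp: add_edge_def)

lemma E_from_v: "E v b \<longleftrightarrow> b = u"
  using simple v_notin u_in by (auto simp: add_edge_def simple_graph_def)

lemma E_old_to_v: "a \<in> V1 \<Longrightarrow> E a v \<longleftrightarrow> a = u"
  using simple v_notin by (auto simp: add_edge_def simple_graph_def)

lemma is_walk_extend: "is_walk V1 E1 xs \<Longrightarrow> is_walk V E xs"
  by (erule is_walk_mono) (auto simp: add_edge_def)

lemma walk_in_V1: "\<lbrakk>x \<in> V1; y \<in> V1\<rbrakk> \<Longrightarrow> \<exists>xs. is_walk V1 E1 xs \<and> hd xs = x \<and> last xs = y"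
  using connected by (auto simp: connected_graph_def)

text \<open>A walk of the extended graph between old vertices enters \<open>v\<close> only as a detour
  \<open>u, v, u\<close>; cutting these detours out gives a walk of the old graph.\<close>
lemma walk_bypass_pendant:
  "\<lbrakk>is_walk V E xs; hd xs \<in> V1; last xs \<in> V1\<rbrakk> \<Longrightarrow>
    \<exists>ys. is_walk V1 E1 ys \<and> hd ys = hd xs \<and> last ys = last xs \<and> length ys \<le> length xs"
proof (induction xs rule: induct_list012)
  case 1
  then show ?case by (simp add: is_walk_def)
next
  case (2 x)
  then show ?case by (intro exI[of _ "[x]"]) auto
next
  case (3 x y zs)
  have x: "x \<in> V1" and Exy: "E x y" and walk: "is_walk V E (y # zs)"
    using "3.prems" by (auto simp: is_walk_Cons_Cons)
  show ?case
  proof (cases "y = v")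
    case True
    then have "x = u" using E_old_to_v x Exy by blast
    obtain r where zs: "zs = u # r"
      using walk True E_from_v "3.prems"(3) v_notin by (cases zs) (auto simp: is_walk_Cons_Cons)
    then obtain ys where "is_walk V1 E1 ys" "hd ys = u" "last ys = last zs" "length ys \<le> length zs"
      using "3.IH"(1) walk True u_in "3.prems"(3) by (auto simp: is_walk_Cons_Cons)
    then show ?thesis using \<open>x = u\<close> zs by (intro exI[of _ ys]) auto
  next
    case False
    then have "E1 x y" using Exy x v_notin by (auto simp: add_edge_def)
    then have "y \<in> V1" using simple by (auto simp: simple_graph_def)
    then obtain ys where ys: "is_walk V1 E1 ys" "hd ys = y" "last ys = last (y # zs)"
      "length ys \<le> length (y # zs)"
      using "3.IH"(2) walk "3.prems"(3) by auto
    then obtain ys' where "ys = y # ys'" by (cases ys) (auto simp: is_walk_def)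
    then show ?thesis
      using ys x \<open>E1 x y\<close> by (intro exI[of _ "x # ys"]) (auto simp: is_walk_Cons_Cons)
  qed
qed

lemma gdist_pendant_old:
  assumes "x \<in> V1" "y \<in> V1"
  shows "gdist V E x y = gdist V1 E1 x y"
proof (rule antisym)
  obtain xs where "is_walk V1 E1 xs" "hd xs = x" "last xs = y" using walk_in_V1 assms by blast
  then obtain ys where ys: "is_walk V1 E1 ys" "hd ys = x" "last ys = y"
    "length ys = Suc (gdist V1 E1 x y)"
    by (rule shortest_walk_exists)
  show "gdist V E x y \<le> gdist V1 E1 x y"
    using gdist_le_length[OF is_walk_extend[OF ys(1)] ys(2,3)] ys(4) by simp
  obtain zs where zs: "is_walk V E zs" "hd zs = x" "last zs = y" "length zs = Suc (gdist V E x y)"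
    using is_walk_extend[OF ys(1)] ys(2,3) by (rule shortest_walk_exists)
  then obtain ws where "is_walk V1 E1 ws" "hd ws = x" "last ws = y" "length ws \<le> length zs"
    using walk_bypass_pendant assms by metis
  then show "gdist V1 E1 x y \<le> gdist V E x y"
    using gdist_le_length[of V1 E1 ws x y] zs(4) by simp
qed

lemma gdist_pendant_new:
  assumes x: "x \<in> V1"
  shows "gdist V E v x = gdist V1 E1 u x + 1"
proof (rule antisym)
  obtain xs where "is_walk V1 E1 xs" "hd xs = u" "last xs = x" using walk_in_V1 x u_in by blast
  then obtain ys where ys: "is_walk V1 E1 ys" "hd ys = u" "last ys = x"
    "length ys = Suc (gdist V1 E1 u x)"
    by (rule shortest_walk_exists)
  then obtain ys' where ys': "ys = u # ys'" by (cases ys) (auto simp: is_walk_def)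
  have walk: "is_walk V E (v # ys)"
    using is_walk_extend[OF ys(1)] ys' E_from_v by (simp add: is_walk_Cons_Cons)
  have last: "last (v # ys) = x" using ys(3) ys' by simp
  show "gdist V E v x \<le> gdist V1 E1 u x + 1"
    using gdist_le_length[OF walk _ last] ys(4) by simp
  obtain zs where zs: "is_walk V E zs" "hd zs = v" "last zs = x" "length zs = Suc (gdist V E v x)"
    using walk _ last by (rule shortest_walk_exists) simp
  obtain r where zs_eq: "zs = v # u # r"
    using zs x v_notin E_from_v
    by (cases zs rule: remdups_adj.cases) (auto simp: is_walk_Cons_Cons)
  then have "gdist V E u x \<le> length (u # r) - 1"
    using zs by (intro gdist_le_length) (auto simp: is_walk_Cons_Cons)
  then show "gdist V1 E1 u x + 1 \<le> gdist V E v x"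
    using gdist_pendant_old[OF u_in x] zs_eq zs(4) by simp
qed

lemma dist_matrix_old_sym: "dist_matrix V1 E1 x y = dist_matrix V1 E1 y x"
  using gdist_sym[of E1, OF E1_sym] by (simp add: dist_matrix_def)

lemma dist_matrix_pendant_old:
  "x \<in> V1 \<Longrightarrow> y \<in> V1 \<Longrightarrow> dist_matrix V E x y = dist_matrix V1 E1 x y"
  by (simp add: dist_matrix_def gdist_pendant_old)

lemma dist_matrix_pendant_new:
  assumes "x \<in> V1"
  shows "dist_matrix V E v x = dist_matrix V1 E1 x u + 1"
    and "dist_matrix V E x v = dist_matrix V1 E1 x u + 1"
proof -
  show "dist_matrix V E v x = dist_matrix V1 E1 x u + 1"
    using assms dist_matrix_old_sym[of u x] by (simp add: dist_matrix_def gdist_pendant_new)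
  then show "dist_matrix V E x v = dist_matrix V1 E1 x u + 1"
    using gdist_sym[of E, OF E_sym] by (simp add: dist_matrix_def)
qed

lemma dist_matrix_pendant_self: "dist_matrix V E v v = 0"
  by (simp add: dist_matrix_def gdist_self)

end

locale pendant_extension_invertible = pendant_extension +
  assumes invertible: "invertible_on V1 (dist_matrix V1 E1)"
    and total_curvature_condition: "2 + (\<Sum>x\<in>V1. curvature V1 E1 x) / real (card V1) \<noteq> 0"
begin

text \<open>In the notation of the proof idea: \<open>R = N \<one>\<close>, \<open>c = N d\<close>, and \<open>-S\<close> is the Schur complement.\<close>
abbreviation N :: "'a \<Rightarrow> 'a \<Rightarrow> real" where "N \<equiv> inverse_on V1 (dist_matrix V1 E1)"
abbreviation R :: "'a \<Rightarrow> real" where "R x \<equiv> \<Sum>y\<in>V1. N x y"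
abbreviation c :: "'a \<Rightarrow> real" where "c x \<equiv> (if x = u then 1 else 0) + R x"
abbreviation S :: real where "S \<equiv> 2 + sum R V1"

lemma is_inverse_on_N: "is_inverse_on V1 (dist_matrix V1 E1) N"
  using is_inverse_on_inverse_on[OF finite_V1 invertible] .

lemma curvature_old_eq: "curvature V1 E1 x = real (card V1) * R x"
  by (simp add: curvature_def)

lemma schur_complement_nonzero: "S \<noteq> 0"
  using total_curvature_condition card_V1_pos by (simp add: curvature_old_eq flip: sum_distrib_left)

lemma is_inverse_on_pendant: "is_inverse_on V (dist_matrix V E) (bordered_inverse v N c (- S))"
proof (rule is_inverse_on_bordered[OF finite_V1 v_notin is_inverse_on_N dist_matrix_old_sym])
  let ?D = "dist_matrix V1 E1"
  show "c x = (\<Sum>y\<in>V1. N x y * (?D y u + 1))" if "x \<in> V1" for x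
    using is_inverse_on_N that u_in by (simp add: distrib_left sum.distrib is_inverse_on_def)
  have "(\<Sum>x\<in>V1. (?D x u + 1) * c x) = ?D u u + 1 + (\<Sum>x\<in>V1. ?D u x * R x) + sum R V1"
    using finite_V1 u_in
    by (simp add: algebra_simps sum.distrib sum_mult_delta_right dist_matrix_old_sym)
  also have "\<dots> = S"
    using is_inverse_on_cancel_right[OF finite_V1 is_inverse_on_N u_in, of "\<lambda>_. 1"] u_in
    by (simp add: dist_matrix_def gdist_self)
  finally show "- S = 0 - (\<Sum>x\<in>V1. (?D x u + 1) * c x)"
    by simp
qed (use dist_matrix_pendant_old dist_matrix_pendant_new dist_matrix_pendant_self
      schur_complement_nonzero in auto)

lemma invertible_on_pendant: "invertible_on V (dist_matrix V E)"
  using is_inverse_on_pendant by (auto simp: invertible_on_def)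

lemma curvature_pendant_rows:
  shows "x \<in> V1 \<Longrightarrow> curvature V E x = (real (card V1) + 1) * (R x - c x * sum R V1 / S)"
    and "curvature V E v = (real (card V1) + 1) * sum R V1 / S"
proof -
  have card: "real (card V) = real (card V1) + 1"
    using finite_V1 v_notin by simp
  have sum_c: "sum c V1 = 1 + sum R V1"
    using finite_V1 u_in by (simp add: sum.distrib)
  have curvature: "curvature V E x = (real (card V1) + 1) * (\<Sum>y\<in>V. bordered_inverse v N c (- S) x y)"
    if "x \<in> V" for x
    using curvature_eq_row_sum[OF _ is_inverse_on_pendant that] finite_V1 card by simp
  show "curvature V E x = (real (card V1) + 1) * (R x - c x * sum R V1 / S)" if "x \<in> V1"
    unfolding curvature[OF insertI2[OF that]] sum_bordered_inverse_row[OF finite_V1 v_notin that]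
    by (simp add: sum_c del: minus_add_distrib)
  show "curvature V E v = (real (card V1) + 1) * sum R V1 / S"
    unfolding curvature[OF insertI1] sum_bordered_inverse_new_row[OF finite_V1 v_notin]
    by (simp add: sum_c del: minus_add_distrib)
qed

abbreviation k1 :: real where "k1 \<equiv> \<Sum>x\<in>V1. curvature V1 E1 x"

lemma total_curvature_old_eq: "k1 = real (card V1) * sum R V1"
  by (simp add: curvature_old_eq sum_distrib_left)

lemma pendant_denominator_eq: "2 * real (card V1) + k1 = real (card V1) * S"
  by (simp add: total_curvature_old_eq algebra_simps)

lemma curvature_pendant_old:
  assumes "x \<in> V1" "x \<noteq> u"
  shows "curvature V E x = 2 * (real (card V1) + 1) / (2 * real (card V1) + k1) * curvature V1 E1 x"
proof -
  have "curvature V E x = 2 * (real (card V1) + 1) * R x / S"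
    using curvature_pendant_rows(1)[OF assms(1)] assms(2) schur_complement_nonzero
    by (simp add: field_simps)
  then show ?thesis
    unfolding pendant_denominator_eq unfolding curvature_old_eq using card_V1_pos by simp
qed

lemma curvature_pendant_attach:
  "curvature V E u = 2 * (real (card V1) + 1) / (2 * real (card V1) + k1) * (curvature V1 E1 u - k1 / 2)"
proof -
  have "curvature V E u = 2 * (real (card V1) + 1) * (R u - sum R V1 / 2) / S"
    using curvature_pendant_rows(1)[OF u_in] schur_complement_nonzero by (simp add: field_simps)
  moreover have "curvature V1 E1 u - k1 / 2 = real (card V1) * (R u - sum R V1 / 2)"
    by (simp add: curvature_old_eq algebra_simps sum_distrib_left)
  ultimately show ?thesis
    unfolding pendant_denominator_eq using card_V1_pos by simp
qed

lemma curvature_pendant_new: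
  "curvature V E v = (real (card V1) + 1) * k1 / (2 * real (card V1) + k1)"
  unfolding curvature_pendant_rows(2) pendant_denominator_eq unfolding total_curvature_old_eq
  using card_V1_pos by simp

end

theorem mainTheorem4:
  fixes V1 :: "'a set" and E1 :: "'a \<Rightarrow> 'a \<Rightarrow> bool" and u v :: 'a
  assumes "simple_graph V1 E1" and "connected_graph V1 E1" and "card V1 \<ge> 2"
    and "u \<in> V1" and "v \<notin> V1"
    and C1: "2 + (\<Sum>x\<in>V1. curvature V1 E1 x) / real (card V1) \<noteq> 0"
    and C2: "invertible_on V1 (dist_matrix V1 E1)"
    and C3: "curvature V1 E1 u \<noteq> 0"
  shows "invertible_on (insert v V1) (dist_matrix (insert v V1) (add_edge E1 u v)) \<and>
    (let n = real (card V1); k1 = (\<Sum>x\<in>V1. curvature V1 E1 x); ku = curvature V1 E1 u;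
         \<alpha> = 2 * (n + 1) / (2 * n + k1); \<gamma> = (1 - k1 / (2 * ku)) * \<alpha>;
         K = curvature (insert v V1) (add_edge E1 u v)
     in (\<forall>x\<in>V1 - {u}. K x = \<alpha> * curvature V1 E1 x) \<and>
        K u = \<gamma> * ku \<and>
        K v = (n + 1) * k1 / (2 * n + k1))"
proof -
  interpret pendant_extension_invertible V1 E1 u v
    using assms by unfold_locales
  define \<alpha> where "\<alpha> = 2 * (real (card V1) + 1) / (2 * real (card V1) + k1)"
  have "curvature V E u = \<alpha> * (curvature V1 E1 u - k1 / 2)"
    unfolding \<alpha>_def by (rule curvature_pendant_attach)
  also have "\<dots> = (1 - k1 / (2 * curvature V1 E1 u)) * \<alpha> * curvature V1 E1 u"
    using C3 by (simp add: field_simps)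
  finally show ?thesis
    using invertible_on_pendant curvature_pendant_old curvature_pendant_new
    by (simp add: Let_def \<alpha>_def)
qed

end
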